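(* (i) In the full-batch case $L^{(s)}\equiv L$ for all $s$, for every $m\ge1$, $l\ge1$, $n\ge0$, one has $E_{\mathfrak c_m}^{(l,n)}=v_{m,l}^{(n)}\,(\nabla^2L)^{m-1}\nabla L$; in particular $v_m^{(n)}:=v_{m,1}^{(n)}$ is the coefficient of the chain term, so $c_m^{(n)}$ contains the term $-\beta v_m^{(n)}(\nabla^2L)^{m-1}\nabla L$ for $m\ge2$. (ii) For all $m\ge2$ and $n\ge1$, $$v_m^{(n)}=v_{m-1}^{(n)}+\beta\sum_{j=1}^{m-1}v_j^{(n-1)}v_{m-j}^{(n)}+\beta v_m^{(n-1)}.$$ (iii) For each $m$ the limit $v_m^{(\infty)}:=\lim_{n\to\infty}v_m^{(n)}$ exists, $v_1^{(\infty)}=(1-\beta)^{-1}$, and $v_m^{(\infty)}=\frac{v_{m-1}^{(\infty)}}{1-\beta}+\frac{\beta}{1-\beta}\sum_{j=1}^{m-1}v_j^{(\infty)}v_{m-j}^{(\infty)}$ for $m\ge2$. (iv) The generating function $g_\beta(x):=\sum_{m\ge0}v_{m+1}^{(\infty)}x^m$ equals $$g_\beta(x)=\frac{1-\beta-x-\sqrt{(1-\beta-x)^2-4\beta x}}{2\beta x}$$ (as a power series at $x=0$, with the branch of the square root equal to $1-\beta$ at $x=0$). (v) For $m\ge1$, $v_{m+1}^{(\infty)}=N_m(\beta)/(1-\beta)^{2m+1}$, where $N_m(\beta)=\sum_{k=1}^m\frac1m\binom mk\binom m{k-1}\beta^{m-k}$ are the Narayana polynomials.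
   Context: Fix $\beta\in(0,1)$. Empty sums are $0$. For integers $n\ge0$, $l\ge1$, define $v_{1,l}^{(n)}=\sum_{b=0}^{n-l}\beta^b$ and for $m\ge2$, $v_{m,l}^{(n)}=\sum_{b=0}^{n-l}\beta^b\sum_{l_1=1}^{l+b}v_{m-1,l_1}^{(n)}$; set $v_m^{(n)}:=v_{m,1}^{(n)}$ (so $v_1^{(n)}=\sum_{b=0}^{n-1}\beta^b$). The chain $\mathfrak c_m$ is the rooted tree with $m$ vertices in which every vertex has at most one child (a path rooted at an endpoint). For a rooted tree $\tau$ whose root has children subtrees $\tau_1,\dots,\tau_\ell$ and losses $L^{(s)}$, $E_\tau^{(l,n)}=\sum_{b=0}^{n-l}\beta^b\nabla^{\ell+1}L^{(n-l-b)}\big[\sum_{l_1=1}^{l+b}E_{\tau_1}^{(l_1,n)},\dots,\sum_{l_\ell=1}^{l+b}E_{\tau_\ell}^{(l_\ell,n)}\big]$, where $\nabla^k$ is the $k$-th derivative tensor; by the theorem on the form of memoryless iteration coefficients, the $m$-th memoryless coefficient of HB is $c_m^{(n)}=-\beta\sum_{\tau}\sigma(\tau)^{-1}E_\tau^{(1,n)}$ over unlabeled rooted trees with $m$ vertices ($\sigma$ the automorphism count), and the chain has $\sigma(\mathfrak c_m)=1$. *)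

theory Defs
  imports "HOL-Analysis.Analysis"
begin

text \<open>The sum over b = 0..n-l is written as b < Suc n - l,
  which is empty when l > n (truncated subtraction).  The index m starts at 1;
  the value at m = 0 is an unused dummy.\<close>
fun vv :: "real \<Rightarrow> nat \<Rightarrow> nat \<Rightarrow> nat \<Rightarrow> real" where
  "vv \<beta> 0 l n = 0"
| "vv \<beta> (Suc 0) l n = (\<Sum>b<Suc n - l. \<beta> ^ b)"
| "vv \<beta> (Suc (Suc m)) l n =
     (\<Sum>b<Suc n - l. \<beta> ^ b * (\<Sum>l1=1..l+b. vv \<beta> (Suc m) l1 n))"

definition v :: "real \<Rightarrow> nat \<Rightarrow> nat \<Rightarrow> real" where
  "v \<beta> m n = vv \<beta> m 1 n"

definition vinf :: "real \<Rightarrow> nat \<Rightarrow> real" where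
  "vinf \<beta> m = lim (\<lambda>n. v \<beta> m n)"

text \<open>Unlabeled rooted trees (root with an ordered list of children subtrees).\<close>
datatype rtree = Node "rtree list"

definition chain :: "nat \<Rightarrow> rtree" where
  "chain m = ((\<lambda>t. Node [t]) ^^ (m - 1)) (Node [])"

text \<open>Derivative tensors: D s k xs stands for the k-th derivative tensor of the loss L^{(s)}
  contracted with the k-1 vectors xs, i.e. \<nabla>^k L^{(s)}[xs] (a vector).
  So D s 1 [] = \<nabla>L^{(s)} and D s 2 [x] = \<nabla>^2 L^{(s)} x.\<close>
definition multilinear_family :: "(nat \<Rightarrow> nat \<Rightarrow> 'a::real_vector list \<Rightarrow> 'a) \<Rightarrow> bool" where
  "multilinear_family D \<longleftrightarrow>
     (\<forall>s k xs ys. length xs + length ys + 2 = k \<longrightarrow> linear (\<lambda>x. D s k (xs @ x # ys)))"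

fun E :: "real \<Rightarrow> (nat \<Rightarrow> nat \<Rightarrow> 'a::real_vector list \<Rightarrow> 'a) \<Rightarrow> rtree \<Rightarrow> nat \<Rightarrow> nat \<Rightarrow> 'a" where
  "E \<beta> D (Node ts) l n =
     (\<Sum>b<Suc n - l. \<beta> ^ b *\<^sub>R
        D (n - l - b) (length ts + 1) (map (\<lambda>t. \<Sum>l1=1..l+b. E \<beta> D t l1 n) ts))"

definition narayana :: "nat \<Rightarrow> real \<Rightarrow> real" where
  "narayana m \<beta> = (\<Sum>k=1..m. (1 / real m) * real (m choose k) * real (m choose (k - 1)) * \<beta> ^ (m - k))"

end

theory Submission
  imports Defs "HOL-Computational_Algebra.Formal_Power_Series"
begin

text \<open>
  In the full-batch case every derivative tensor is the same, so along a chain the nested sums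
  defining \<open>E\<close> only multiply scalars, and the scalar is \<open>vv\<close>.  Splitting off the first
  summand of the inner sum and shifting \<open>(l, n) \<mapsto> (l + 1, n + 1)\<close> gives the recurrence (ii).
  Since \<open>v m n\<close> grows with \<open>n\<close>, (ii) bounds it by the limits of the \<open>v j\<close>, \<open>j < m\<close>, so it
  converges, and \<open>a\<^sub>m = vinf \<beta> (m + 1)\<close> satisfies the convolution recurrence
  \<open>(1 - \<beta>) a\<^sub>m\<^sub>+\<^sub>1 = a\<^sub>m + \<beta> \<Sum>\<^sub>i a\<^sub>i a\<^sub>m\<^sub>-\<^sub>i\<close>.  For the formal power series \<open>G = \<Sum> a\<^sub>m x\<^sup>m\<close>
  this says \<open>(1 - \<beta>) G = 1 + x G + \<beta> x G\<^sup>2\<close>, so \<open>D = 1 - \<beta> - x - 2\<beta>xG\<close> squares to a quadratic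
  polynomial, and differentiating \<open>D\<^sup>2\<close> yields a three-term linear recurrence for the \<open>a\<^sub>m\<close>.
  The Narayana polynomials satisfy the same recurrence (checked coefficientwise on binomial
  coefficients), which proves (v).  The resulting bound \<open>N\<^sub>m(\<beta>) \<le> 4\<^sup>m\<close> makes the series
  converge near \<open>0\<close>; its sum solves the quadratic equation, and smallness of \<open>x\<close> selects the
  root in (iv).
\<close>

section \<open>Chain terms in the full-batch case\<close>

lemma chain_Suc_Suc: "chain (Suc (Suc m)) = Node [chain (Suc m)]"
  by (simp add: chain_def)

lemma multilinear_family_linear_Hessian:
  assumes "multilinear_family D"
  shows "linear (\<lambda>x. D s 2 [x])"
  using assms[unfolded multilinear_family_def, rule_format, of "[]" "[]" 2 s] by simp

lemma E_chain:
  fixes D :: "nat \<Rightarrow> nat \<Rightarrow> 'a::real_vector list \<Rightarrow> 'a"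
  assumes lin: "linear (\<lambda>x. D 0 2 [x])" and full_batch: "\<And>s. D s = D 0" and "1 \<le> m"
  shows "E \<beta> D (chain m) l n = vv \<beta> m l n *\<^sub>R ((\<lambda>x. D 0 2 [x]) ^^ (m - 1)) (D 0 1 [])"
proof -
  obtain k where m: "m = Suc k" using \<open>1 \<le> m\<close> by (cases m) auto
  have "E \<beta> D (chain (Suc k)) l n = vv \<beta> (Suc k) l n *\<^sub>R ((\<lambda>x. D 0 2 [x]) ^^ k) (D 0 1 [])"
  proof (induction k arbitrary: l)
    case 0
    have "D (n - (l + b)) = D 0" for b by (rule full_batch)
    then show ?case by (simp add: chain_def scaleR_sum_left)
  next
    case (Suc k)
    let ?w = "((\<lambda>x. D 0 2 [x]) ^^ k) (D 0 1 [])"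
    have children: "(\<Sum>l1=1..l+b. E \<beta> D (chain (Suc k)) l1 n)
        = (\<Sum>l1=1..l+b. vv \<beta> (Suc k) l1 n) *\<^sub>R ?w" for b
      by (simp add: Suc.IH scaleR_sum_left)
    have "E \<beta> D (chain (Suc (Suc k))) l n =
        (\<Sum>b<Suc n - l. \<beta> ^ b *\<^sub>R D 0 2 [(\<Sum>l1=1..l+b. E \<beta> D (chain (Suc k)) l1 n)])"
      using full_batch[of "n - (l + _)"] by (simp add: chain_Suc_Suc numeral_2_eq_2)
    also have "\<dots> = (\<Sum>b<Suc n - l. (\<beta> ^ b * (\<Sum>l1=1..l+b. vv \<beta> (Suc k) l1 n)) *\<^sub>R D 0 2 [?w])"
      unfolding children by (simp add: linear_scale[OF lin])
    also have "\<dots> = vv \<beta> (Suc (Suc k)) l n *\<^sub>R D 0 2 [?w]"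
      by (simp add: scaleR_sum_left)
    finally show ?case by simp
  qed
  then show ?thesis by (simp add: m)
qed

section \<open>The recurrence for the coefficients\<close>

lemma sum_atLeast1_atMost_Suc:
  "(\<Sum>i=1..Suc k. f i) = f 1 + (\<Sum>i=1..k. f (Suc i))"
proof -
  have "(\<Sum>i=1..Suc k. f i) = f 1 + (\<Sum>i=Suc 1..Suc k. f i)"
    by (rule sum.atLeast_Suc_atMost) simp
  then show ?thesis by (simp only: sum.shift_bounds_cl_Suc_ivl)
qed

text \<open>
  Shifting \<open>(l, n)\<close> to \<open>(l + 1, n + 1)\<close> leaves the range of \<open>b\<close> unchanged; in the inner
  sum the summand \<open>l\<^sub>1 = 1\<close> produces the factor \<open>v\<close>, the others are covered by induction.
\<close>

lemma vv_Suc_shift: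
  "vv \<beta> (Suc m) (Suc l) (Suc n) = vv \<beta> (Suc m) l n
     + (\<Sum>j=1..m. vv \<beta> j l n * v \<beta> (Suc m - j) (Suc n))"
proof (induction m arbitrary: l)
  case 0
  then show ?case by simp
next
  case (Suc m)
  let ?f = "\<lambda>l1. vv \<beta> (Suc m) l1 (Suc n)"
  let ?C = "\<lambda>j b. \<Sum>l1=1..l+b. vv \<beta> j l1 n"
  have inner: "(\<Sum>l1=1..Suc (l+b). ?f l1) = v \<beta> (Suc m) (Suc n) + ?C (Suc m) b
      + (\<Sum>j=1..m. v \<beta> (Suc m - j) (Suc n) * ?C j b)" for b
  proof -
    have "(\<Sum>l1=1..Suc (l+b). ?f l1) = ?f 1 + (\<Sum>l1=1..l+b. ?f (Suc l1))"
      by (rule sum_atLeast1_atMost_Suc)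
    also have "(\<Sum>l1=1..l+b. ?f (Suc l1)) = (\<Sum>l1=1..l+b. vv \<beta> (Suc m) l1 n
        + (\<Sum>j=1..m. vv \<beta> j l1 n * v \<beta> (Suc m - j) (Suc n)))"
      using Suc.IH by simp
    also have "\<dots> = ?C (Suc m) b + (\<Sum>j=1..m. v \<beta> (Suc m - j) (Suc n) * ?C j b)"
      by (simp add: sum.distrib sum_distrib_left mult.commute, rule sum.swap)
    finally show ?thesis by (simp add: v_def)
  qed
  have "vv \<beta> (Suc (Suc m)) (Suc l) (Suc n) = (\<Sum>b<Suc n - l. \<beta> ^ b * (\<Sum>l1=1..Suc (l+b). ?f l1))"
    by simp
  also have "\<dots> = v \<beta> (Suc m) (Suc n) * vv \<beta> 1 l n + vv \<beta> (Suc (Suc m)) l n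
     + (\<Sum>j=1..m. v \<beta> (Suc m - j) (Suc n) * (\<Sum>b<Suc n - l. \<beta> ^ b * ?C j b))"
    unfolding inner
    by (simp add: algebra_simps sum.distrib sum_distrib_left sum_distrib_right, rule sum.swap)
  also have "(\<Sum>j=1..m. v \<beta> (Suc m - j) (Suc n) * (\<Sum>b<Suc n - l. \<beta> ^ b * ?C j b))
      = (\<Sum>j=1..m. vv \<beta> (Suc j) l n * v \<beta> (Suc (Suc m) - Suc j) (Suc n))"
  proof (rule sum.cong[OF refl])
    fix j assume "j \<in> {1..m}"
    then obtain i where "j = Suc i" by (cases j) auto
    then show "v \<beta> (Suc m - j) (Suc n) * (\<Sum>b<Suc n - l. \<beta> ^ b * ?C j b)
        = vv \<beta> (Suc j) l n * v \<beta> (Suc (Suc m) - Suc j) (Suc n)" by simp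
  qed
  also have "v \<beta> (Suc m) (Suc n) * vv \<beta> 1 l n + vv \<beta> (Suc (Suc m)) l n + \<dots>
      = vv \<beta> (Suc (Suc m)) l n + (\<Sum>j=1..Suc m. vv \<beta> j l n * v \<beta> (Suc (Suc m) - j) (Suc n))"
    unfolding sum_atLeast1_atMost_Suc[of "\<lambda>j. vv \<beta> j l n * v \<beta> (Suc (Suc m) - j) (Suc n)"]
    by (simp only: diff_Suc_1 ac_simps)
  finally show ?case .
qed

theorem v_recurrence:
  assumes "2 \<le> m" "1 \<le> n"
  shows "v \<beta> m n = v \<beta> (m - 1) n + \<beta> * (\<Sum>j=1..m-1. v \<beta> j (n - 1) * v \<beta> (m - j) n)
                   + \<beta> * v \<beta> m (n - 1)"
proof -
  obtain k where m: "m = Suc (Suc k)"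
    using assms(1) by (metis add_2_eq_Suc le_Suc_ex)
  obtain p where n: "n = Suc p"
    using assms(2) by (cases n) auto
  have "v \<beta> m n = (\<Sum>b<Suc p. \<beta> ^ b * (\<Sum>l1=1..1+b. vv \<beta> (Suc k) l1 (Suc p)))"
    by (simp add: m n v_def)
  also have "\<dots> = vv \<beta> (Suc k) 1 (Suc p)
      + (\<Sum>b<p. \<beta> ^ Suc b * (\<Sum>l1=1..Suc (Suc b). vv \<beta> (Suc k) l1 (Suc p)))"
    by (simp add: sum.lessThan_Suc_shift del: sum.lessThan_Suc)
  also have "(\<Sum>b<p. \<beta> ^ Suc b * (\<Sum>l1=1..Suc (Suc b). vv \<beta> (Suc k) l1 (Suc p)))
      = \<beta> * vv \<beta> (Suc (Suc k)) 2 (Suc p)"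
    by (simp add: sum_distrib_left mult.assoc)
  also have "vv \<beta> (Suc (Suc k)) 2 (Suc p) = vv \<beta> (Suc (Suc k)) 1 p
      + (\<Sum>j=1..Suc k. vv \<beta> j 1 p * v \<beta> (Suc (Suc k) - j) (Suc p))"
    using vv_Suc_shift[of \<beta> "Suc k" 1 p] by (simp add: numeral_2_eq_2)
  finally show ?thesis by (simp add: m n v_def algebra_simps sum_distrib_left)
qed

section \<open>Convergence and the limit recurrence\<close>

lemma vv_nonneg: "0 \<le> \<beta> \<Longrightarrow> 0 \<le> vv \<beta> m l n"
  by (induction \<beta> m l n rule: vv.induct) (auto intro!: sum_nonneg mult_nonneg_nonneg)

lemma vv_mono:
  assumes "0 \<le> \<beta>"
  shows "vv \<beta> (Suc m) l n \<le> vv \<beta> (Suc m) l (Suc n)"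
proof (induction m arbitrary: l)
  case 0
  show ?case using assms by (simp, intro sum_mono2) auto
next
  case (Suc m)
  have "vv \<beta> (Suc (Suc m)) l n \<le> (\<Sum>b<Suc n - l. \<beta> ^ b * (\<Sum>l1=1..l+b. vv \<beta> (Suc m) l1 (Suc n)))"
    using assms Suc.IH by (auto intro!: sum_mono mult_left_mono)
  also have "\<dots> \<le> vv \<beta> (Suc (Suc m)) l (Suc n)"
    using assms by (auto intro!: sum_mono2 sum_nonneg mult_nonneg_nonneg vv_nonneg)
  finally show ?case .
qed

lemma incseq_v: "0 \<le> \<beta> \<Longrightarrow> 1 \<le> m \<Longrightarrow> incseq (\<lambda>n. v \<beta> m n)"
  unfolding v_def using vv_mono[of \<beta> "m - 1" 1] by (intro incseq_SucI) simp

lemma v_one: "v \<beta> 1 n = (\<Sum>b<n. \<beta> ^ b)"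
  by (simp add: v_def)

lemma v_one_tendsto: "0 < \<beta> \<Longrightarrow> \<beta> < 1 \<Longrightarrow> (\<lambda>n. v \<beta> 1 n) \<longlonglongrightarrow> 1 / (1 - \<beta>)"
  unfolding v_one using geometric_sums[of \<beta>] by (simp add: sums_def)

lemma v_convergent:
  assumes "0 < \<beta>" "\<beta> < 1"
  shows "1 \<le> m \<Longrightarrow> convergent (\<lambda>n. v \<beta> m n)"
proof (induction m rule: less_induct)
  case (less m)
  consider "m = 1" | "2 \<le> m" using less.prems by linarith
  then show ?case
  proof cases
    case 1
    then show ?thesis using v_one_tendsto assms by (auto simp: convergent_def)
  next
    case 2
    have below_lim: "v \<beta> j n \<le> vinf \<beta> j" if "j \<in> {1..m-1}" for j n
      using that less.IH[of j] assms incseq_v[of \<beta> j]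
      by (auto intro!: incseq_le simp: vinf_def convergent_LIMSEQ_iff)
    have lim_nonneg: "0 \<le> vinf \<beta> j" if "j \<in> {1..m-1}" for j
      using below_lim[OF that, of 0] vv_nonneg[of \<beta> j 1 0] assms by (simp add: v_def)
    have step: "v \<beta> m n \<le> v \<beta> m (Suc n)" for n
      using incseq_v[of \<beta> m] assms 2 by (simp add: incseq_Suc_iff)
    define M where "M = (vinf \<beta> (m-1) + \<beta> * (\<Sum>j=1..m-1. vinf \<beta> j * vinf \<beta> (m - j))) / (1 - \<beta>)"
    have "v \<beta> m (Suc n) \<le> M" for n
    proof -
      have products: "(\<Sum>j=1..m-1. v \<beta> j n * v \<beta> (m - j) (Suc n))
          \<le> (\<Sum>j=1..m-1. vinf \<beta> j * vinf \<beta> (m - j))"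
        using assms by (intro sum_mono mult_mono below_lim) (auto intro!: lim_nonneg vv_nonneg simp: v_def)
      have "\<beta> * v \<beta> m n \<le> \<beta> * v \<beta> m (Suc n)"
        using step assms by simp
      moreover have "v \<beta> (m-1) (Suc n) \<le> vinf \<beta> (m-1)"
        using 2 by (intro below_lim) auto
      moreover have "\<beta> * (\<Sum>j=1..m-1. v \<beta> j n * v \<beta> (m - j) (Suc n))
          \<le> \<beta> * (\<Sum>j=1..m-1. vinf \<beta> j * vinf \<beta> (m - j))"
        using products assms by simp
      ultimately have "(1 - \<beta>) * v \<beta> m (Suc n)
          \<le> vinf \<beta> (m-1) + \<beta> * (\<Sum>j=1..m-1. vinf \<beta> j * vinf \<beta> (m - j))"
        using v_recurrence[OF 2, of "Suc n" \<beta>] by (simp add: algebra_simps)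
      then show ?thesis using assms by (simp add: M_def field_simps)
    qed
    then have "v \<beta> m n \<le> M" for n
      using step order_trans by blast
    then obtain L where "(\<lambda>n. v \<beta> m n) \<longlonglongrightarrow> L"
      using incseq_convergent[OF incseq_v] assms 2 by (metis less_imp_le one_le_numeral order.trans)
    then show ?thesis by (auto simp: convergent_def)
  qed
qed

lemma v_tendsto_vinf:
  assumes "0 < \<beta>" "\<beta> < 1" "1 \<le> m"
  shows "(\<lambda>n. v \<beta> m n) \<longlonglongrightarrow> vinf \<beta> m"
  using v_convergent[OF assms] by (simp add: vinf_def convergent_LIMSEQ_iff)

lemma vinf_one:
  assumes "0 < \<beta>" "\<beta> < 1"
  shows "vinf \<beta> 1 = 1 / (1 - \<beta>)"
  using v_tendsto_vinf[OF assms order_refl] v_one_tendsto[OF assms] by (rule LIMSEQ_unique)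

lemma vinf_nonneg:
  assumes "0 < \<beta>" "\<beta> < 1" "1 \<le> m"
  shows "0 \<le> vinf \<beta> m"
  using v_tendsto_vinf[OF assms] assms(1)
  by (intro LIMSEQ_le_const[of _ _ 0]) (auto simp: v_def intro!: vv_nonneg)

lemma vinf_fixed_point:
  assumes "0 < \<beta>" "\<beta> < 1" "2 \<le> m"
  shows "vinf \<beta> m = vinf \<beta> (m - 1) + \<beta> * (\<Sum>j=1..m-1. vinf \<beta> j * vinf \<beta> (m - j)) + \<beta> * vinf \<beta> m"
proof -
  have lim: "(\<lambda>n. v \<beta> j (Suc n)) \<longlonglongrightarrow> vinf \<beta> j" if "1 \<le> j" for j
    using v_tendsto_vinf[OF assms(1,2) that] by (rule LIMSEQ_Suc)
  have "(\<lambda>n. v \<beta> (m - 1) (Suc n) + \<beta> * (\<Sum>j=1..m-1. v \<beta> j n * v \<beta> (m - j) (Suc n)) + \<beta> * v \<beta> m n)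
      \<longlonglongrightarrow> vinf \<beta> (m - 1) + \<beta> * (\<Sum>j=1..m-1. vinf \<beta> j * vinf \<beta> (m - j)) + \<beta> * vinf \<beta> m"
    using assms by (intro tendsto_intros lim v_tendsto_vinf) auto
  moreover have "(\<lambda>n. v \<beta> (m - 1) (Suc n) + \<beta> * (\<Sum>j=1..m-1. v \<beta> j n * v \<beta> (m - j) (Suc n)) + \<beta> * v \<beta> m n)
      = (\<lambda>n. v \<beta> m (Suc n))"
    using v_recurrence[OF assms(3)] by simp
  ultimately show ?thesis
    using lim[of m] assms(3) LIMSEQ_unique by auto
qed

theorem vinf_recurrence:
  assumes "0 < \<beta>" "\<beta> < 1" "2 \<le> m"
  shows "vinf \<beta> m = vinf \<beta> (m - 1) / (1 - \<beta>)
                + \<beta> / (1 - \<beta>) * (\<Sum>j=1..m-1. vinf \<beta> j * vinf \<beta> (m - j))"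
proof -
  have "(1 - \<beta>) * vinf \<beta> m = vinf \<beta> (m - 1) + \<beta> * (\<Sum>j=1..m-1. vinf \<beta> j * vinf \<beta> (m - j))"
    using vinf_fixed_point[OF assms] by (simp add: algebra_simps)
  then have "vinf \<beta> m = (vinf \<beta> (m - 1) + \<beta> * (\<Sum>j=1..m-1. vinf \<beta> j * vinf \<beta> (m - j))) / (1 - \<beta>)"
    using assms(2) by (simp add: eq_divide_eq mult.commute)
  then show ?thesis by (simp add: add_divide_distrib)
qed

lemma vinf_convolution:
  assumes "0 < \<beta>" "\<beta> < 1"
  shows "(1 - \<beta>) * vinf \<beta> (Suc (Suc m))
    = vinf \<beta> (Suc m) + \<beta> * (\<Sum>i\<le>m. vinf \<beta> (Suc i) * vinf \<beta> (Suc (m - i)))"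
proof -
  have "(\<Sum>j=1..Suc m. vinf \<beta> j * vinf \<beta> (Suc (Suc m) - j))
      = (\<Sum>i\<le>m. vinf \<beta> (Suc i) * vinf \<beta> (Suc (m - i)))"
    unfolding One_nat_def sum.shift_bounds_cl_Suc_ivl atLeast0AtMost
    by (intro sum.cong refl) (simp add: Suc_diff_le)
  then show ?thesis
    using vinf_fixed_point[OF assms, of "Suc (Suc m)"] by (simp add: algebra_simps)
qed

section \<open>A three-term recurrence for the limits\<close>

lemma fps_square_quadratic_coeffs:
  fixes D :: "'a::comm_ring_1 fps"
  assumes sq: "D^2 = fps_const p0 + fps_const p1 * fps_X + fps_const p2 * fps_X^2"
  shows "2 * p0 * of_nat (k + 3) * fps_nth D (k + 3) + p1 * of_nat (2 * k + 3) * fps_nth D (k + 2)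
    + 2 * p2 * of_nat k * fps_nth D (k + 1) = 0"
proof -
  let ?P = "fps_const p0 + fps_const p1 * fps_X + fps_const p2 * fps_X^2"
  let ?P' = "fps_const p1 + 2 * fps_const p2 * fps_X"
  have "fps_deriv ?P = ?P'"
    by (rule fps_ext) (simp add: fps_deriv_nth power2_eq_square numeral_fps_const)
  moreover have "fps_deriv (D^2) = 2 * D * fps_deriv D"
    by (simp add: power2_eq_square algebra_simps)
  ultimately have deriv: "2 * D * fps_deriv D = ?P'"
    using sq by simp
  have "D * ?P' = 2 * D^2 * fps_deriv D"
    unfolding deriv[symmetric] by (simp add: power2_eq_square ac_simps)
  then have "fps_const p1 * D + 2 * fps_const p2 * (fps_X * D)
      = 2 * fps_const p0 * fps_deriv D + 2 * fps_const p1 * (fps_X * fps_deriv D)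
        + 2 * fps_const p2 * (fps_X * (fps_X * fps_deriv D))"
    unfolding sq by (simp add: algebra_simps power2_eq_square)
  then have "fps_nth (fps_const p1 * D + 2 * fps_const p2 * (fps_X * D)) (k + 2)
      = fps_nth (2 * fps_const p0 * fps_deriv D + 2 * fps_const p1 * (fps_X * fps_deriv D)
        + 2 * fps_const p2 * (fps_X * (fps_X * fps_deriv D))) (k + 2)"
    by (rule arg_cong)
  then have "p1 * fps_nth D (k + 2) + 2 * p2 * fps_nth D (k + 1)
      = 2 * p0 * (of_nat (k + 3) * fps_nth D (k + 3)) + 2 * p1 * (of_nat (k + 2) * fps_nth D (k + 2))
          + 2 * p2 * (of_nat (k + 1) * fps_nth D (k + 1))"
    by (simp add: fps_deriv_nth numeral_fps_const numeral_eq_Suc)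
  then show ?thesis
    by (simp add: algebra_simps numeral_eq_Suc)
qed

lemma convolution_recurrence_three_term:
  fixes a :: "nat \<Rightarrow> 'a::field_char_0"
  assumes "\<beta> \<noteq> 0"
    and a0: "(1 - \<beta>) * a 0 = 1"
    and rec: "\<And>m. (1 - \<beta>) * a (Suc m) = a m + \<beta> * (\<Sum>i\<le>m. a i * a (m - i))"
  shows "(1 - \<beta>)^2 * (of_nat k + 3) * a (k + 2) = (1 + \<beta>) * (2 * of_nat k + 3) * a (k + 1) - of_nat k * a k"
proof -
  define G where "G = Abs_fps a"
  define c where "c = fps_const \<beta>"
  have quadratic: "(1 - c) * G = 1 + fps_X * G + c * fps_X * G^2"
  proof (rule fps_ext)
    fix n
    show "fps_nth ((1 - c) * G) n = fps_nth (1 + fps_X * G + c * fps_X * G^2) n"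
    proof (cases n)
      case 0
      then show ?thesis using a0 by (simp add: c_def G_def algebra_simps)
    next
      case (Suc m)
      have "fps_nth (G * G) m = (\<Sum>i\<le>m. a i * a (m - i))"
        by (simp add: G_def fps_mult_nth atLeast0AtMost)
      then have "fps_nth (1 + fps_X * G + c * fps_X * G^2) (Suc m) = a m + \<beta> * (\<Sum>i\<le>m. a i * a (m - i))"
        by (simp add: c_def mult.assoc power2_eq_square, simp add: G_def)
      moreover have "fps_nth ((1 - c) * G) (Suc m) = (1 - \<beta>) * a (Suc m)"
        by (simp add: c_def G_def algebra_simps)
      ultimately show ?thesis
        using rec[of m] Suc by simp
    qed
  qed
  \<comment> \<open>\<open>D\<close> is a square root of the discriminant of the quadratic equation for \<open>G\<close>.\<close>
  define D where "D = 1 - c - fps_X - 2 * c * fps_X * G"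
  have "D^2 = fps_const ((1 - \<beta>)^2) + fps_const (- (2 * (1 + \<beta>))) * fps_X + fps_const 1 * fps_X^2"
  proof -
    have p0: "fps_const ((1 - \<beta>)^2) = (1 - c)^2"
      unfolding c_def by (simp only: flip: fps_const_1_eq_1) (simp only: fps_const_sub fps_const_power)
    have p1: "fps_const (- (2 * (1 + \<beta>))) = - (2 * (1 + c))"
      unfolding c_def by (simp only: numeral_fps_const flip: fps_const_1_eq_1)
        (simp only: fps_const_add fps_const_neg fps_const_mult)
    have "D^2 - ((1 - c)^2 + - (2 * (1 + c)) * fps_X + 1 * fps_X^2)
        = - 4 * c * fps_X * ((1 - c) * G - (1 + fps_X * G + c * fps_X * G^2))"
      by (simp add: D_def power2_eq_square algebra_simps)
    also have "\<dots> = 0"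
      using quadratic by simp
    finally show ?thesis
      unfolding p0 p1 fps_const_1_eq_1 by (rule right_minus_eq[THEN iffD1])
  qed
  from fps_square_quadratic_coeffs[OF this, of k]
  have coeffs: "2 * (1 - \<beta>)^2 * (of_nat k + 3) * fps_nth D (k + 3) - 2 * (1 + \<beta>) * (2 * of_nat k + 3) * fps_nth D (k + 2)
      + 2 * (of_nat k * fps_nth D (k + 1)) = 0"
    by (simp add: algebra_simps)
  have D_nth: "fps_nth D (k + 3) = - 2 * \<beta> * a (k + 2)" "fps_nth D (k + 2) = - 2 * \<beta> * a (k + 1)"
    by (simp_all add: D_def c_def G_def numeral_fps_const mult.assoc numeral_eq_Suc)
  have D_nth': "of_nat k * fps_nth D (k + 1) = of_nat k * (- 2 * \<beta> * a k)"
    by (cases k) (simp_all add: D_def c_def G_def numeral_fps_const mult.assoc)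
  have "4 * \<beta> * ((1 + \<beta>) * (2 * of_nat k + 3) * a (k + 1) - of_nat k * a k
      - (1 - \<beta>)^2 * (of_nat k + 3) * a (k + 2)) = 0"
    using coeffs unfolding D_nth D_nth' by (simp add: algebra_simps)
  then have "(1 + \<beta>) * (2 * of_nat k + 3) * a (k + 1) - of_nat k * a k
      - (1 - \<beta>)^2 * (of_nat k + 3) * a (k + 2) = 0"
    using \<open>\<beta> \<noteq> 0\<close> by simp
  then show ?thesis
    by (metis right_minus_eq)
qed

section \<open>Narayana polynomials\<close>

lemma real_binomial_Suc_right:
  "real (n choose Suc k) = (real n - real k) / (real k + 1) * real (n choose k)"
proof -
  have "real n * real (n choose k) = real k * real (n choose k) + real (Suc k) * real (n choose Suc k)"
    using gbinomial_mult_1[of "real n" k] by (simp add: binomial_gbinomial)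
  then show ?thesis by (simp add: field_simps)
qed

lemma real_binomial_absorb_comp:
  "n \<noteq> 0 \<Longrightarrow> real ((n - 1) choose k) = (real n - real k) / real n * real (n choose k)"
  using gbinomial_absorb_comp[of "real n" k] by (simp add: binomial_gbinomial of_nat_diff field_simps)

lemma real_binomial_absorption:
  "n \<noteq> 0 \<Longrightarrow> real ((n - 1) choose k) = (real k + 1) / real n * real (n choose Suc k)"
  using gbinomial_absorption[of k "real n"] by (simp add: binomial_gbinomial of_nat_diff field_simps)

text \<open>
  \<open>narayana_coeff m j\<close> is the coefficient of \<open>\<beta>\<^sup>j\<close> in \<open>narayana m \<beta>\<close> (the summand \<open>k = m - j\<close>),
  and \<open>shift_coeff f\<close> is the coefficient sequence of \<open>\<beta>\<close> times the polynomial with coefficients \<open>f\<close>.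
\<close>

definition narayana_coeff :: "nat \<Rightarrow> nat \<Rightarrow> real" where
  "narayana_coeff m j = real (m choose j) * real (m choose Suc j) / real m"

definition shift_coeff :: "(nat \<Rightarrow> real) \<Rightarrow> nat \<Rightarrow> real" where
  "shift_coeff f j = (if j = 0 then 0 else f (j - 1))"

text \<open>
  The coefficientwise Narayana recurrence, with every binomial coefficient expressed through
  \<open>p = n choose j\<close>, \<open>x = n\<close>, \<open>J = j\<close>; \<open>u, v, z, w\<close> are the inverses of \<open>x, x - 1, x - 2, J + 1\<close>.
\<close>

lemma narayana_rational_identity:
  fixes x J p u v w z :: real
  assumes "x * u = 1" "(x - 1) * v = 1" "(x - 2) * z = 1" "(J + 1) * w = 1"
  shows "(x + 1) * (p * ((x - J) * w * p) * u)
    = (2 * x - 1) * (((x - J) * u * p) * ((x - 1 - J) * w * ((x - J) * u * p)) * v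
        + (J * u * p) * ((x - J) * u * p) * v)
      - (x - 2) * (((x - 1 - J) * v * ((x - J) * u * p))
            * ((x - 2 - J) * w * ((x - 1 - J) * v * ((x - J) * u * p))) * z
         - 2 * ((J * v * ((x - J) * u * p)) * ((x - 1 - J) * v * ((x - J) * u * p)) * z)
         + ((J - 1) * v * (J * u * p)) * (J * v * ((x - J) * u * p)) * z)"
  using assms by algebra

lemma shift_narayana_coeff:
  assumes "2 \<le> m"
  shows "shift_coeff (narayana_coeff (m - 1)) j
    = real j / real m * real (m choose j) * real ((m - 1) choose j) / (real m - 1)"
proof (cases j)
  case (Suc i)
  then show ?thesis
    using real_binomial_absorption[of m i] assms by (simp add: shift_coeff_def narayana_coeff_def of_nat_diff)
qed (simp add: shift_coeff_def)

lemma shift_shift_narayana_coeff: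
  assumes "3 \<le> m"
  shows "shift_coeff (shift_coeff (narayana_coeff (m - 2))) j
    = (real j - 1) / (real m - 1) * (real j / real m * real (m choose j))
      * (real j / (real m - 1) * real ((m - 1) choose j)) / (real m - 2)"
proof (cases "j < 2")
  case False
  then obtain i where j: "j = Suc (Suc i)"
    by (metis add_2_eq_Suc le_Suc_ex not_less)
  have m: "m - 1 \<noteq> 0" "m - 1 - 1 = m - 2" "real (m - 1) = real m - 1" "real (m - 2) = real m - 2"
    using assms by (auto simp: of_nat_diff)
  have "real ((m - 2) choose i) = (real j - 1) / (real m - 1) * real ((m - 1) choose Suc i)"
    using real_binomial_absorption[of "m - 1" i] m j by simp
  moreover have "real ((m - 1) choose Suc i) = real j / real m * real (m choose j)"
    using real_binomial_absorption[of m "Suc i"] m j by simp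
  moreover have "real ((m - 2) choose Suc i) = real j / (real m - 1) * real ((m - 1) choose j)"
    using real_binomial_absorption[of "m - 1" "Suc i"] m j by simp
  ultimately show ?thesis
    using m j by (simp add: shift_coeff_def narayana_coeff_def)
qed (auto simp: shift_coeff_def less_2_cases_iff)

lemma narayana_coeff_recurrence:
  assumes "3 \<le> n"
  shows "(real n + 1) * narayana_coeff n j
    = (2 * real n - 1) * (narayana_coeff (n - 1) j + shift_coeff (narayana_coeff (n - 1)) j)
      - (real n - 2) * (narayana_coeff (n - 2) j - 2 * shift_coeff (narayana_coeff (n - 2)) j
          + shift_coeff (shift_coeff (narayana_coeff (n - 2))) j)"
proof -
  define x J p where "x = real n" and "J = real j" and "p = real (n choose j)"
  define u v w z where "u = inverse x" and "v = inverse (x - 1)" and "w = inverse (J + 1)" and "z = inverse (x - 2)"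
  have inv: "x * u = 1" "(x - 1) * v = 1" "(x - 2) * z = 1" "(J + 1) * w = 1"
    using assms by (simp_all add: x_def J_def u_def v_def w_def z_def)
  have n_diff: "real (n - 1) = x - 1" "real (n - 2) = x - 2" "n - 1 - 1 = n - 2" "n - 1 \<noteq> 0" "n \<noteq> 0"
    using assms by (auto simp: x_def of_nat_diff)
  define c0 d0 where "c0 = (x - J) * u * p" and "d0 = (x - 1 - J) * v * c0"
  have C0: "real ((n - 1) choose j) = c0"
    using real_binomial_absorb_comp[of n j] n_diff by (simp add: c0_def x_def J_def p_def u_def divide_inverse)
  have D0: "real ((n - 2) choose j) = d0"
    using real_binomial_absorb_comp[of "n - 1" j] n_diff C0 by (simp add: d0_def J_def v_def divide_inverse)
  have N0: "narayana_coeff n j = p * ((x - J) * w * p) * u"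
    by (simp add: narayana_coeff_def real_binomial_Suc_right x_def J_def p_def u_def w_def divide_inverse)
  have N1: "narayana_coeff (n - 1) j = c0 * ((x - 1 - J) * w * c0) * v"
    using n_diff unfolding narayana_coeff_def real_binomial_Suc_right C0
    by (simp add: J_def v_def w_def divide_inverse)
  have N2: "narayana_coeff (n - 2) j = d0 * ((x - 2 - J) * w * d0) * z"
    using n_diff by (simp add: narayana_coeff_def real_binomial_Suc_right D0 J_def z_def w_def divide_inverse)
  have S1: "shift_coeff (narayana_coeff (n - 1)) j = (J * u * p) * c0 * v"
    using shift_narayana_coeff[of n j, unfolded C0] assms
    by (simp add: J_def p_def x_def u_def v_def divide_inverse)
  have S2: "shift_coeff (narayana_coeff (n - 2)) j = (J * v * c0) * d0 * z"
    using shift_narayana_coeff[of "n - 1" j, unfolded C0 n_diff(1,3) D0] assms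
    by (simp add: J_def v_def z_def divide_inverse algebra_simps)
  have S22: "shift_coeff (shift_coeff (narayana_coeff (n - 2))) j
      = ((J - 1) * v * (J * u * p)) * (J * v * c0) * z"
    using shift_shift_narayana_coeff[of n j, unfolded C0] assms
    by (simp add: J_def p_def x_def u_def v_def z_def divide_inverse)
  show ?thesis
    unfolding N0 N1 N2 S1 S2 S22 x_def[symmetric] c0_def d0_def using narayana_rational_identity[OF inv] .
qed

lemma sum_shift_coeff:
  "\<beta> * (\<Sum>j\<le>M. f j * \<beta> ^ j) = (\<Sum>j\<le>Suc M. shift_coeff f j * \<beta> ^ j)"
  by (simp add: sum.atMost_Suc_shift sum_distrib_left mult_ac shift_coeff_def del: sum.atMost_Suc)

lemma narayana_eq_sum_coeff:
  assumes "m \<le> Suc M"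
  shows "narayana m \<beta> = (\<Sum>j\<le>M. narayana_coeff m j * \<beta> ^ j)"
proof -
  have "narayana m \<beta> = (\<Sum>j<m. narayana_coeff m j * \<beta> ^ j)"
    unfolding narayana_def
  proof (rule sum.reindex_bij_witness[of _ "\<lambda>j. m - j" "\<lambda>k. m - k"])
    fix k assume k: "k \<in> {1..m}"
    have "m choose (m - k) = m choose k"
      using k by (simp add: binomial_symmetric[symmetric])
    moreover have "m choose Suc (m - k) = m choose (k - 1)"
    proof -
      have "Suc (m - k) = m - (k - 1)"
        using k by auto
      moreover have "m choose (k - 1) = m choose (m - (k - 1))"
        by (rule binomial_symmetric) (use k in auto)
      ultimately show ?thesis by simp
    qed
    ultimately show "narayana_coeff m (m - k) * \<beta> ^ (m - k)
        = 1 / real m * real (m choose k) * real (m choose (k - 1)) * \<beta> ^ (m - k)"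
      by (simp add: narayana_coeff_def)
  qed auto
  also have "\<dots> = (\<Sum>j\<le>M. narayana_coeff m j * \<beta> ^ j)"
    using assms by (intro sum.mono_neutral_left) (auto simp: narayana_coeff_def binomial_eq_0)
  finally show ?thesis .
qed

lemma narayana_recurrence_ge_3:
  assumes n: "3 \<le> n"
  shows "(real n + 1) * narayana n \<beta>
    = (1 + \<beta>) * (2 * real n - 1) * narayana (n - 1) \<beta> - (real n - 2) * (1 - \<beta>)^2 * narayana (n - 2) \<beta>"
proof -
  define S where "S f = (\<Sum>j\<le>n. f j * \<beta> ^ j)" for f
  have N0: "narayana n \<beta> = S (narayana_coeff n)"
    unfolding S_def by (rule narayana_eq_sum_coeff) simp
  have N1: "narayana (n - 1) \<beta> = S (narayana_coeff (n - 1))"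
    unfolding S_def by (rule narayana_eq_sum_coeff) simp
  have N2: "narayana (n - 2) \<beta> = S (narayana_coeff (n - 2))"
    unfolding S_def by (rule narayana_eq_sum_coeff) simp
  have n': "Suc (n - 1) = n" "Suc (n - 2) = n - 1"
    using n by auto
  have S1: "\<beta> * S (narayana_coeff (n - 1)) = S (shift_coeff (narayana_coeff (n - 1)))"
    using narayana_eq_sum_coeff[of "n - 1" "n - 1" \<beta>] n' unfolding N1[symmetric]
    by (simp add: S_def sum_shift_coeff)
  have S2: "\<beta> * S (narayana_coeff (n - 2)) = S (shift_coeff (narayana_coeff (n - 2)))"
    using narayana_eq_sum_coeff[of "n - 2" "n - 1" \<beta>] n' unfolding N2[symmetric]
    by (simp add: S_def sum_shift_coeff)
  have S22: "\<beta>^2 * S (narayana_coeff (n - 2)) = S (shift_coeff (shift_coeff (narayana_coeff (n - 2))))"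
    using narayana_eq_sum_coeff[of "n - 2" "n - 2" \<beta>] n' unfolding N2[symmetric]
    by (simp add: S_def power2_eq_square mult.assoc sum_shift_coeff)
  have "(real n + 1) * S (narayana_coeff n) = S (\<lambda>j. (real n + 1) * narayana_coeff n j)"
    by (simp add: S_def sum_distrib_left mult.assoc)
  also have "\<dots> = S (\<lambda>j. (2 * real n - 1) * (narayana_coeff (n - 1) j + shift_coeff (narayana_coeff (n - 1)) j)
      - (real n - 2) * (narayana_coeff (n - 2) j - 2 * shift_coeff (narayana_coeff (n - 2)) j
        + shift_coeff (shift_coeff (narayana_coeff (n - 2))) j))"
    by (simp only: narayana_coeff_recurrence[OF n])
  also have "\<dots> = (2 * real n - 1) * (S (narayana_coeff (n - 1)) + S (shift_coeff (narayana_coeff (n - 1))))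
      - (real n - 2) * (S (narayana_coeff (n - 2)) - 2 * S (shift_coeff (narayana_coeff (n - 2)))
        + S (shift_coeff (shift_coeff (narayana_coeff (n - 2)))))"
    by (simp add: S_def algebra_simps sum.distrib sum_subtractf sum_distrib_left)
  finally show ?thesis
    unfolding N0 N1 N2 S1[symmetric] S2[symmetric] S22[symmetric]
    by (simp add: algebra_simps power2_eq_square)
qed

theorem narayana_recurrence:
  "(real k + 3) * narayana (k + 2) \<beta>
    = (1 + \<beta>) * (2 * real k + 3) * narayana (k + 1) \<beta> - real k * (1 - \<beta>)^2 * narayana k \<beta>"
proof (cases k)
  case 0
  have "{1..2::nat} = {1, 2}" by auto
  then show ?thesis using 0 by (simp add: narayana_def numeral_2_eq_2)
next
  case (Suc i)
  then show ?thesis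
    using narayana_recurrence_ge_3[of "k + 2" \<beta>] by (simp add: algebra_simps)
qed

lemma three_term_recurrence_unique:
  fixes x y :: "nat \<Rightarrow> real"
  assumes x: "\<And>k. (real k + 3) * x (k + 2) = p k * x (k + 1) - real k * q * x k"
    and y: "\<And>k. (real k + 3) * y (k + 2) = p k * y (k + 1) - real k * q * y k"
    and "x 1 = y 1"
  shows "1 \<le> m \<Longrightarrow> x m = y m"
proof (induction m rule: less_induct)
  case (less m)
  show ?case
  proof (cases "m = 1")
    case True
    then show ?thesis using \<open>x 1 = y 1\<close> by simp
  next
    case False
    define k where "k = m - 2"
    have m: "m = k + 2" using False less.prems by (simp add: k_def)
    have "x (k + 1) = y (k + 1)"
      using less.IH[of "k + 1"] m by simp
    moreover have "real k * q * x k = real k * q * y k"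
      using less.IH[of k] m by (cases k) auto
    ultimately have "(real k + 3) * x (k + 2) = (real k + 3) * y (k + 2)"
      using x[of k] y[of k] by simp
    then show ?thesis
      using m by (simp add: add_eq_0_iff_both_eq_0)
  qed
qed

lemma rescaled_three_term:
  fixes a :: "nat \<Rightarrow> real"
  assumes "(1 - \<beta>)^2 * (real k + 3) * a (k + 2) = (1 + \<beta>) * (2 * real k + 3) * a (k + 1) - real k * a k"
  defines "e i \<equiv> a i * (1 - \<beta>) ^ (2 * i + 1)"
  shows "(real k + 3) * e (k + 2) = (1 + \<beta>) * (2 * real k + 3) * e (k + 1) - real k * (1 - \<beta>)^2 * e k"
proof -
  define q where "q = (1 - \<beta>) ^ (2 * k + 3)"
  have exponents: "2 * (k + 2) + 1 = 2 + (2 * k + 3)" "2 * (k + 1) + 1 = 2 * k + 3" "2 * k + 3 = 2 + (2 * k + 1)"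
    by simp_all
  have "(real k + 3) * e (k + 2) = ((1 - \<beta>)^2 * (real k + 3) * a (k + 2)) * q"
    unfolding e_def q_def exponents(1) power_add[of "1 - \<beta>" 2 "2 * k + 3"] by (simp only: ac_simps)
  also have "\<dots> = ((1 + \<beta>) * (2 * real k + 3) * a (k + 1) - real k * a k) * q"
    by (simp only: assms(1))
  also have "\<dots> = (1 + \<beta>) * (2 * real k + 3) * e (k + 1) - real k * (1 - \<beta>)^2 * e k"
    unfolding e_def q_def exponents(2,3) power_add[of "1 - \<beta>" 2 "2 * k + 1"] by (simp add: algebra_simps)
  finally show ?thesis .
qed

theorem convolution_sequence_narayana:
  fixes a :: "nat \<Rightarrow> real"
  assumes "\<beta> \<noteq> 0" "\<beta> \<noteq> 1"
    and a0: "(1 - \<beta>) * a 0 = 1"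
    and rec: "\<And>m. (1 - \<beta>) * a (Suc m) = a m + \<beta> * (\<Sum>i\<le>m. a i * a (m - i))"
    and "1 \<le> m"
  shows "a m = narayana m \<beta> / (1 - \<beta>) ^ (2 * m + 1)"
proof -
  define e where "e i = a i * (1 - \<beta>) ^ (2 * i + 1)" for i
  have e_rec: "(real k + 3) * e (k + 2) = (1 + \<beta>) * (2 * real k + 3) * e (k + 1) - real k * (1 - \<beta>)^2 * e k" for k
    unfolding e_def by (rule rescaled_three_term[OF convolution_recurrence_three_term[OF assms(1) a0 rec]])
  have a1: "(1 - \<beta>) * a 1 = a 0 + \<beta> * a 0 * a 0"
    using rec[of 0] by simp
  have "e 1 = ((1 - \<beta>) * a 1) * (1 - \<beta>)^2"
    by (simp add: e_def power3_eq_cube power2_eq_square ac_simps)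
  also have "\<dots> = ((1 - \<beta>) * a 0) * (1 - \<beta>) + \<beta> * ((1 - \<beta>) * a 0) * ((1 - \<beta>) * a 0)"
    unfolding a1 by (simp add: power2_eq_square algebra_simps)
  also have "\<dots> = narayana 1 \<beta>"
    by (simp add: a0 narayana_def)
  finally have "e m = narayana m \<beta>"
    by (rule three_term_recurrence_unique[of e "\<lambda>k. (1 + \<beta>) * (2 * real k + 3)" "(1 - \<beta>)^2"
        "\<lambda>m. narayana m \<beta>", OF e_rec narayana_recurrence _ \<open>1 \<le> m\<close>])
  moreover have "(1 - \<beta>) ^ (2 * m + 1) \<noteq> 0"
    using assms(2) by simp
  ultimately show ?thesis
    by (simp add: e_def eq_divide_eq del: power_Suc)
qed

theorem vinf_narayana:
  assumes "0 < \<beta>" "\<beta> < 1" "1 \<le> m"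
  shows "vinf \<beta> (m + 1) = narayana m \<beta> / (1 - \<beta>) ^ (2 * m + 1)"
  using convolution_sequence_narayana[of \<beta> "\<lambda>i. vinf \<beta> (Suc i)" m] vinf_one[OF assms(1,2)]
    vinf_convolution[OF assms(1,2)] assms
  by simp

section \<open>The generating function\<close>

lemma narayana_le_four_pow:
  assumes "0 \<le> \<beta>" "\<beta> \<le> 1"
  shows "narayana m \<beta> \<le> 4 ^ m"
proof (cases "m = 0")
  case True
  then show ?thesis by (simp add: narayana_def)
next
  case False
  have "narayana m \<beta> \<le> (\<Sum>k=1..m. 1 / real m * 4 ^ m)"
    unfolding narayana_def
  proof (rule sum_mono)
    fix k
    have "real (m choose k) * real (m choose (k - 1)) * \<beta> ^ (m - k) \<le> 2 ^ m * 2 ^ m * 1"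
      using assms binomial_le_pow2[of m k] binomial_le_pow2[of m "k - 1"]
      by (intro mult_mono) (auto simp: power_le_one simp flip: of_nat_le_iff)
    then show "1 / real m * real (m choose k) * real (m choose (k - 1)) * \<beta> ^ (m - k) \<le> 1 / real m * 4 ^ m"
      by (simp add: mult.assoc power_mult_distrib[symmetric] divide_right_mono)
  qed
  also have "\<dots> = 4 ^ m"
    using False by simp
  finally show ?thesis .
qed

lemma vinf_geometric_bound:
  assumes "0 < \<beta>" "\<beta> < 1"
  shows "\<bar>vinf \<beta> (m + 1)\<bar> \<le> 1 / (1 - \<beta>) * (4 / (1 - \<beta>)^2) ^ m"
proof (cases "m = 0")
  case True
  then show ?thesis using vinf_one[OF assms] assms by simp
next
  case False
  have "\<bar>vinf \<beta> (m + 1)\<bar> = vinf \<beta> (m + 1)"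
    using vinf_nonneg[OF assms, of "m + 1"] by simp
  also have "\<dots> = narayana m \<beta> / (1 - \<beta>) ^ (2 * m + 1)"
    using vinf_narayana[OF assms, of m] False by simp
  also have "\<dots> \<le> 4 ^ m / (1 - \<beta>) ^ (2 * m + 1)"
    using narayana_le_four_pow[of \<beta> m] assms by (intro divide_right_mono) auto
  also have "\<dots> = 1 / (1 - \<beta>) * (4 / (1 - \<beta>)^2) ^ m"
    by (simp add: power_divide power_mult[symmetric] field_simps)
  finally show ?thesis .
qed

lemma geometric_majorant:
  fixes a :: "nat \<Rightarrow> real"
  assumes bound: "\<And>m. \<bar>a m\<bar> \<le> K * c ^ m" and "0 \<le> c" and x: "c * \<bar>x\<bar> \<le> 1 / 2"
  shows "summable (\<lambda>m. norm (a m * x ^ m))" and "\<bar>suminf (\<lambda>m. a m * x ^ m)\<bar> \<le> 2 * K"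
proof -
  define q where "q = c * \<bar>x\<bar>"
  have q: "0 \<le> q" "q \<le> 1 / 2"
    using assms by (simp_all add: q_def)
  have K: "0 \<le> K"
    using bound[of 0] by simp
  have majorant: "norm (a m * x ^ m) \<le> K * q ^ m" for m
  proof -
    have "norm (a m * x ^ m) \<le> K * c ^ m * \<bar>x\<bar> ^ m"
      using bound[of m] by (simp add: abs_mult power_abs mult_right_mono)
    then show ?thesis
      by (simp add: q_def power_mult_distrib mult.assoc)
  qed
  have geometric: "(\<lambda>m. K * q ^ m) sums (K / (1 - q))"
    using sums_mult[OF geometric_sums[of q], of K] q by simp
  show summable: "summable (\<lambda>m. norm (a m * x ^ m))"
    using majorant by (intro summable_comparison_test'[OF sums_summable[OF geometric]]) auto
  have "\<bar>suminf (\<lambda>m. a m * x ^ m)\<bar> \<le> (\<Sum>m. norm (a m * x ^ m))"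
    using summable_norm[OF summable] by simp
  also have "\<dots> \<le> (\<Sum>m. K * q ^ m)"
    using majorant summable geometric by (intro suminf_le) (auto simp: sums_iff)
  also have "\<dots> = K / (1 - q)"
    using geometric by (simp add: sums_iff)
  also have "\<dots> \<le> 2 * K"
    using q K mult_left_mono[of "q * 2" 1 K] by (simp add: field_simps)
  finally show "\<bar>suminf (\<lambda>m. a m * x ^ m)\<bar> \<le> 2 * K" .
qed

lemma convolution_series_quadratic:
  fixes a :: "nat \<Rightarrow> real"
  assumes a0: "(1 - \<beta>) * a 0 = 1"
    and rec: "\<And>m. (1 - \<beta>) * a (Suc m) = a m + \<beta> * (\<Sum>i\<le>m. a i * a (m - i))"
    and summable: "summable (\<lambda>m. norm (a m * x ^ m))"
  defines "G \<equiv> suminf (\<lambda>m. a m * x ^ m)"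
  shows "(1 - \<beta>) * G = 1 + x * G + \<beta> * x * G^2"
proof -
  define f where "f = (\<lambda>m. a m * x ^ m)"
  have f: "f sums G"
    using summable_norm_cancel[OF summable] by (simp add: G_def f_def summable_sums)
  have "(\<lambda>m. \<Sum>i\<le>m. f i * f (m - i)) sums (G * G)"
    using Cauchy_product_sums[OF summable summable] f by (simp add: f_def sums_iff)
  then have "(\<lambda>m. x * f m + \<beta> * x * (\<Sum>i\<le>m. f i * f (m - i))) sums (x * G + \<beta> * x * (G * G))"
    by (intro sums_add sums_mult f)
  moreover have "x * f m + \<beta> * x * (\<Sum>i\<le>m. f i * f (m - i)) = (1 - \<beta>) * f (Suc m)" for m
  proof -
    have "(\<Sum>i\<le>m. f i * f (m - i)) = x ^ m * (\<Sum>i\<le>m. a i * a (m - i))"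
      unfolding f_def sum_distrib_left
      by (intro sum.cong refl) (simp add: power_add[symmetric] algebra_simps)
    then have "x * f m + \<beta> * x * (\<Sum>i\<le>m. f i * f (m - i)) = x * x ^ m * (a m + \<beta> * (\<Sum>i\<le>m. a i * a (m - i)))"
      by (simp add: f_def algebra_simps)
    also have "\<dots> = x * x ^ m * ((1 - \<beta>) * a (Suc m))"
      by (simp only: rec)
    finally show ?thesis
      by (simp add: f_def algebra_simps)
  qed
  ultimately have "(\<lambda>m. (1 - \<beta>) * f (Suc m)) sums (x * G + \<beta> * x * (G * G))"
    by simp
  then have "(\<lambda>m. (1 - \<beta>) * f m) sums (x * G + \<beta> * x * (G * G) + (1 - \<beta>) * f 0)"
    using sums_Suc_iff[of "\<lambda>m. (1 - \<beta>) * f m"] by simp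
  with sums_mult[OF f, of "1 - \<beta>"] have "(1 - \<beta>) * G = x * G + \<beta> * x * (G * G) + (1 - \<beta>) * f 0"
    by (rule sums_unique2)
  then show ?thesis
    using a0 by (simp add: f_def power2_eq_square algebra_simps)
qed

lemma quadratic_small_root:
  fixes \<beta> x G :: real
  assumes quadratic: "(1 - \<beta>) * G = 1 + x * G + \<beta> * x * G^2"
    and "\<beta> * x \<noteq> 0" and pos: "0 < 1 - \<beta> - x - 2 * \<beta> * x * G"
  shows "G = (1 - \<beta> - x - sqrt ((1 - \<beta> - x)^2 - 4 * \<beta> * x)) / (2 * \<beta> * x)"
proof -
  define D where "D = 1 - \<beta> - x - 2 * \<beta> * x * G"
  have "D^2 - ((1 - \<beta> - x)^2 - 4 * \<beta> * x) = 4 * \<beta> * x * (1 + x * G + \<beta> * x * G^2 - (1 - \<beta>) * G)"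
    by (simp add: D_def power2_eq_square algebra_simps)
  then have "(1 - \<beta> - x)^2 - 4 * \<beta> * x = D^2"
    using quadratic by simp
  then have "sqrt ((1 - \<beta> - x)^2 - 4 * \<beta> * x) = D"
    using pos by (simp add: D_def)
  then show ?thesis
    using \<open>\<beta> * x \<noteq> 0\<close> by (simp add: D_def field_simps)
qed

theorem vinf_generating_function:
  assumes "0 < \<beta>" "\<beta> < 1"
  shows "\<exists>r>0. (\<forall>x. \<bar>x\<bar> < r \<longrightarrow> summable (\<lambda>m. vinf \<beta> (m + 1) * x ^ m)) \<and>
    (\<forall>x. 0 < \<bar>x\<bar> \<and> \<bar>x\<bar> < r \<longrightarrow>
       (\<lambda>m. vinf \<beta> (m + 1) * x ^ m) sums
         ((1 - \<beta> - x - sqrt ((1 - \<beta> - x)\<^sup>2 - 4 * \<beta> * x)) / (2 * \<beta> * x)))"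
proof (intro exI conjI allI impI)
  define t where "t = 1 - \<beta>"
  have t: "0 < t" "t < 1"
    using assms by (simp_all add: t_def)
  \<comment> \<open>Small enough for the geometric majorant and for \<open>1 - \<beta> - x - 2\<beta>xG > 0\<close>, which selects the root.\<close>
  define r where "r = t^2 / 8"
  show "0 < r"
    using t by (simp add: r_def)
  define a where "a m = vinf \<beta> (m + 1)" for m
  have a0: "(1 - \<beta>) * a 0 = 1"
    using vinf_one[OF assms] assms by (simp add: a_def)
  have rec: "(1 - \<beta>) * a (Suc m) = a m + \<beta> * (\<Sum>i\<le>m. a i * a (m - i))" for m
    using vinf_convolution[OF assms, of m] by (simp add: a_def)
  have majorant: "summable (\<lambda>m. norm (a m * x ^ m))" "\<bar>suminf (\<lambda>m. a m * x ^ m)\<bar> \<le> 2 / t"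
    if "\<bar>x\<bar> < r" for x
  proof -
    have "4 / t^2 * \<bar>x\<bar> \<le> 1 / 2"
      using that t by (simp add: r_def field_simps)
    then show "summable (\<lambda>m. norm (a m * x ^ m))" "\<bar>suminf (\<lambda>m. a m * x ^ m)\<bar> \<le> 2 / t"
      using geometric_majorant[of a "1 / t" "4 / t^2" x] vinf_geometric_bound[OF assms]
      by (simp_all add: a_def t_def)
  qed
  fix x :: real
  show "summable (\<lambda>m. vinf \<beta> (m + 1) * x ^ m)" if "\<bar>x\<bar> < r"
    using summable_norm_cancel[OF majorant(1)[OF that]] by (simp add: a_def)
  assume x: "0 < \<bar>x\<bar> \<and> \<bar>x\<bar> < r"
  define G where "G = suminf (\<lambda>m. a m * x ^ m)"
  have "\<bar>2 * \<beta> * x * G\<bar> \<le> 4 * \<bar>x\<bar> / t"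
  proof -
    have "\<bar>2 * \<beta> * x * G\<bar> \<le> 2 * \<bar>x\<bar> * \<bar>G\<bar>"
      using assms mult_left_le_one_le[of "\<bar>x\<bar> * \<bar>G\<bar>" \<beta>] by (simp add: abs_mult)
    also have "\<dots> \<le> 2 * \<bar>x\<bar> * (2 / t)"
      using majorant(2)[of x] x by (intro mult_left_mono) (auto simp: G_def)
    finally show ?thesis by simp
  qed
  moreover have "\<bar>x\<bar> + 4 * \<bar>x\<bar> / t < t"
  proof -
    have "\<bar>x\<bar> * (t + 4) < r * (t + 4)"
      using x t by (intro mult_strict_right_mono) auto
    also have "\<dots> = t * t * ((t + 4) / 8)"
      by (simp add: r_def power2_eq_square)
    also have "\<dots> < t * t * 1"
      using t by (intro mult_strict_left_mono) auto
    finally have "\<bar>x\<bar> * (t + 4) < t * t"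
      by simp
    then show ?thesis
      using t by (simp add: field_simps)
  qed
  ultimately have "0 < 1 - \<beta> - x - 2 * \<beta> * x * G"
    using abs_ge_self[of x] unfolding t_def abs_le_iff by linarith
  then have "G = (1 - \<beta> - x - sqrt ((1 - \<beta> - x)\<^sup>2 - 4 * \<beta> * x)) / (2 * \<beta> * x)"
    using convolution_series_quadratic[OF a0 rec majorant(1)] quadratic_small_root x assms
    by (simp add: G_def)
  moreover have "(\<lambda>m. a m * x ^ m) sums G"
    using summable_norm_cancel[OF majorant(1)] x by (simp add: G_def summable_sums)
  ultimately show "(\<lambda>m. vinf \<beta> (m + 1) * x ^ m) sums
      ((1 - \<beta> - x - sqrt ((1 - \<beta> - x)\<^sup>2 - 4 * \<beta> * x)) / (2 * \<beta> * x))"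
    by (simp add: a_def)
qed

theorem mainTheorem10:
  fixes \<beta> :: real
  assumes beta: "0 < \<beta>" "\<beta> < 1"
  shows
    \<comment> \<open>(i) full-batch chain terms\<close>
    "(\<forall>(D :: nat \<Rightarrow> nat \<Rightarrow> 'a::real_vector list \<Rightarrow> 'a).
        multilinear_family D \<longrightarrow> (\<forall>s. D s = D 0) \<longrightarrow>
        (\<forall>m l n. 1 \<le> m \<longrightarrow> 1 \<le> l \<longrightarrow>
            E \<beta> D (chain m) l n = vv \<beta> m l n *\<^sub>R (((\<lambda>x. D 0 2 [x]) ^^ (m - 1)) (D 0 1 [])))
        \<and> (\<forall>m n. 2 \<le> m \<longrightarrow>
            - \<beta> *\<^sub>R E \<beta> D (chain m) 1 n = (- \<beta> * v \<beta> m n) *\<^sub>R (((\<lambda>x. D 0 2 [x]) ^^ (m - 1)) (D 0 1 []))))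
     \<and> \<comment> \<open>(ii)\<close>
     (\<forall>m n. 2 \<le> m \<longrightarrow> 1 \<le> n \<longrightarrow>
        v \<beta> m n = v \<beta> (m - 1) n + \<beta> * (\<Sum>j=1..m-1. v \<beta> j (n - 1) * v \<beta> (m - j) n)
                   + \<beta> * v \<beta> m (n - 1))
     \<and> \<comment> \<open>(iii)\<close>
     (\<forall>m\<ge>1. convergent (\<lambda>n. v \<beta> m n))
     \<and> vinf \<beta> 1 = 1 / (1 - \<beta>)
     \<and> (\<forall>m\<ge>2. vinf \<beta> m = vinf \<beta> (m - 1) / (1 - \<beta>)
                + \<beta> / (1 - \<beta>) * (\<Sum>j=1..m-1. vinf \<beta> j * vinf \<beta> (m - j)))
     \<and> \<comment> \<open>(iv) generating function, as an identity of convergent power series near 0\<close>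
     (\<exists>r>0. (\<forall>x. \<bar>x\<bar> < r \<longrightarrow> summable (\<lambda>m. vinf \<beta> (m + 1) * x ^ m)) \<and>
        (\<forall>x. 0 < \<bar>x\<bar> \<and> \<bar>x\<bar> < r \<longrightarrow>
           (\<lambda>m. vinf \<beta> (m + 1) * x ^ m) sums
             ((1 - \<beta> - x - sqrt ((1 - \<beta> - x)\<^sup>2 - 4 * \<beta> * x)) / (2 * \<beta> * x))))
     \<and> \<comment> \<open>(v) Narayana\<close>
     (\<forall>m\<ge>1. vinf \<beta> (m + 1) = narayana m \<beta> / (1 - \<beta>) ^ (2 * m + 1))"
proof -
  have chain: "E \<beta> D (chain m) l n = vv \<beta> m l n *\<^sub>R ((\<lambda>x. D 0 2 [x]) ^^ (m - 1)) (D 0 1 [])"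
    if "multilinear_family D" "\<forall>s. D s = D 0" "1 \<le> m"
    for D :: "nat \<Rightarrow> nat \<Rightarrow> 'a::real_vector list \<Rightarrow> 'a" and m l n
    using E_chain[where D = D, OF multilinear_family_linear_Hessian[OF that(1)]] that(2,3) by blast
  show ?thesis
    using chain v_recurrence v_convergent[OF beta] vinf_one[OF beta] vinf_recurrence[OF beta]
      vinf_generating_function[OF beta] vinf_narayana[OF beta]
    by (auto simp: v_def)
qed

end
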